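(* With the notation of the context (a unital partition $\mathcal{P}$ of $G=\mu_{p^n}$, $p$ odd prime, and the sets $A_{i,k}$, $B_{j,k}$ and integer $u_k$ attached to a fixed $A\in\mathcal{P}_k$ and $y\in A\cap B_k$), if $B_{j,k}\subseteq A_{i,k}$ then $j\equiv i\pmod{u_k}$.
   Context: A unital partition of a finite commutative group $G$ is a partition $G=\{1\}\sqcup A_0\sqcup\dots\sqcup A_s$ such that, with $a_i=\sum_{x\in A_i}x\in\mathbb{Z}[G]$, the $\mathbb{Z}$-span of $1$ and the $a_i$ is closed under multiplication in $\mathbb{Z}[G]$. Fix $\alpha$ an integer generating $(\mathbb{Z}/p^n\mathbb{Z})^\times$. $B_k=\{x^{p^k}\mid x\text{ a generator of }G\}$, $\mathcal{P}_k=\{A\in\mathcal{P}\mid A\cap B_k\neq\emptyset\}$. Fix $A\in\mathcal{P}_k$, $y\in A\cap B_k$; $u_k$ is the smallest positive integer with $y^{\alpha^{u_k}}\in A$, $\beta_k=\alpha^{u_k}$, $r_k+1=\phi(p^{n-k})/u_k$. For $X\subseteq G$, $X^m=\{x^m:x\in X\}$. $A_{i,k}=A^{\alpha^i}$, $B_{0,k}=\{y,y^{\beta_k},\dots,y^{\beta_k^{r_k}}\}$, $B_{i,k}=B_{0,k}^{\alpha^i}$. *)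

theory Defs
  imports Complex_Main "HOL-Number_Theory.Number_Theory"
begin

definition mu :: "nat \<Rightarrow> complex set" where
  "mu N = {z. z ^ N = 1}"

definition generators :: "nat \<Rightarrow> complex set" where
  "generators N = {z \<in> mu N. \<forall>d. 0 < d \<and> d < N \<longrightarrow> z ^ d \<noteq> 1}"

text \<open>Elements of the group ring Z[mu_N] are represented as functions
  complex => int vanishing outside mu_N; this is the group ring product.\<close>
definition grmult :: "nat \<Rightarrow> (complex \<Rightarrow> int) \<Rightarrow> (complex \<Rightarrow> int) \<Rightarrow> (complex \<Rightarrow> int)" where
  "grmult N f g = (\<lambda>z. if z \<in> mu N then (\<Sum>w\<in>mu N. f w * g (z / w)) else 0)"

text \<open>The group ring element sum_{x in S} x.\<close>
definition indic :: "complex set \<Rightarrow> complex \<Rightarrow> int" where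
  "indic S = (\<lambda>z. if z \<in> S then 1 else 0)"

definition zspan :: "complex set set \<Rightarrow> (complex \<Rightarrow> int) set" where
  "zspan P = {f. \<exists>c0 c. f = (\<lambda>z. c0 * indic {1} z + (\<Sum>A\<in>P. c A * indic A z))}"

definition unital_partition :: "nat \<Rightarrow> complex set set \<Rightarrow> bool" where
  "unital_partition N P \<longleftrightarrow>
     finite P \<and> P \<noteq> {} \<and> (\<forall>A\<in>P. A \<noteq> {}) \<and>
     (\<forall>A\<in>P. \<forall>B\<in>P. A \<noteq> B \<longrightarrow> A \<inter> B = {}) \<and>
     \<Union>P = mu N - {1} \<and>
     (\<forall>f\<in>zspan P. \<forall>g\<in>zspan P. grmult N f g \<in> zspan P)"

end

theory Submission
  imports Defs "HOL-Library.Poly_Mapping" "HOL-Computational_Algebra.Primes"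
begin

(* The key input is Schur's
   lemma for unital partitions: for every m coprime to N and every block A of P,
   the image A^m = {x^m | x in A} is a union of blocks.  For a prime q coprime
   to N this is seen in the group ring: (a_A)^q lies in the span of the blocks,
   hence is constant on each block, while by the "freshman's dream" it is
   congruent mod q to the indicator of A^q.  Composing primes gives all m.
   Consequently a block A with x, x^m in A is stable: A^m = A.  Hence the set
   of exponents e with A^(alpha^e) = A is closed under shifts by its least
   positive element u, and x^(alpha^e) in A iff u divides e, for every x in A.
   The theorem follows: from y^(alpha^j) = x^(alpha^i) with x, y in A we get
   x = y^(alpha^(j-i)) or y = x^(alpha^(i-j)), so u divides |i - j|. *)


section \<open>Roots of unity\<close>

lemma finite_mu: "N > 0 \<Longrightarrow> finite (mu N)"
  unfolding mu_def by (rule finite_roots_unity) simp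

lemma zero_notin_mu: "N > 0 \<Longrightarrow> (0::complex) \<notin> mu N"
  unfolding mu_def by (simp add: zero_power)

lemma one_in_mu: "(1::complex) \<in> mu N"
  unfolding mu_def by simp

lemma mu_mult: "a \<in> mu N \<Longrightarrow> b \<in> mu N \<Longrightarrow> a * b \<in> mu N"
  unfolding mu_def by (simp add: power_mult_distrib)

lemma mu_pow: "x \<in> mu N \<Longrightarrow> x ^ m \<in> mu N"
  unfolding mu_def by (simp add: power_mult[symmetric] mult.commute[of m N] power_mult)

lemma coprime_nonzero:
  assumes "(N::nat) > 1" "coprime m N"
  shows "m \<noteq> 0"
  using assms by (cases "m = 0") auto

text \<open>Raising to a power coprime to N is injective on mu_N (Bezout).\<close>
lemma mu_pow_inj:
  assumes N: "N > 1" and cop: "coprime m N" and x: "x \<in> mu N" and y: "y \<in> mu N"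
    and eq: "x ^ m = y ^ m"
  shows "x = y"
proof -
  have "m \<noteq> 0" using coprime_nonzero[OF N cop] .
  then obtain a b where "m * a = N * b + gcd m N" using bezout_nat by blast
  then have ab: "m * a = N * b + 1" using cop by simp
  have y0: "y \<noteq> 0" using y zero_notin_mu[of N] N by auto
  define z where "z = x / y"
  have zN: "z ^ N = 1" using x y unfolding z_def mu_def by (simp add: power_divide)
  have zm: "z ^ m = 1" using eq y0 unfolding z_def by (simp add: power_divide)
  have "z = z ^ (N * b + 1)" using zN by (simp add: power_mult)
  also have "\<dots> = z ^ (m * a)" using ab by simp
  also have "\<dots> = 1" using zm by (simp add: power_mult)
  finally show ?thesis using y0 unfolding z_def by simp
qed

lemma mu_pow_ne1:
  assumes "N > 1" "coprime m N" "x \<in> mu N - {1}"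
  shows "x ^ m \<in> mu N - {1}"
  using mu_pow_inj[OF assms(1,2), of x 1] assms(3) mu_pow[of x N m] one_in_mu[of N] by auto

lemma powi_mu:
  assumes N: "N > 0" and x: "x \<in> mu N"
  shows "x powi k = x ^ nat (k mod int N)"
proof -
  have x0: "x \<noteq> 0" using x zero_notin_mu[OF N] by auto
  have xN: "x ^ N = 1" using x unfolding mu_def by simp
  have k: "k = int N * (k div int N) + k mod int N" by simp
  have "x powi k = x powi (int N * (k div int N)) * x powi (k mod int N)"
    by (subst k, rule power_int_add) (simp add: x0)
  also have "x powi (int N * (k div int N)) = 1"
    by (simp add: power_int_mult xN)
  also have "x powi (k mod int N) = x ^ nat (k mod int N)"
    by (rule power_int_nonneg_exp) (use N in simp)
  finally show ?thesis by simp
qed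

lemma coprime_nat_mod:
  assumes N: "N > 1" and a: "coprime a (int N)"
  shows "coprime (nat (a mod int N)) N"
proof -
  have "coprime (int (nat (a mod int N))) (int N)" using a N by simp
  then show ?thesis by (simp only: coprime_int_iff)
qed

lemma powi_mu_in: "N > 0 \<Longrightarrow> x \<in> mu N \<Longrightarrow> x powi a \<in> mu N"
  using powi_mu[of N x a] mu_pow by simp

lemma powi_mu_inj:
  assumes N: "N > 1" and a: "coprime a (int N)" and x: "x \<in> mu N" and y: "y \<in> mu N"
    and eq: "x powi a = y powi a"
  shows "x = y"
proof -
  have "x ^ nat (a mod int N) = y ^ nat (a mod int N)"
    using eq powi_mu[of N x a] powi_mu[of N y a] x y N by simp
  then show ?thesis by (rule mu_pow_inj[OF N coprime_nat_mod[OF N a] x y])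
qed

lemma powi_alpha_add: "(x::complex) powi (\<alpha> ^ (a + b)) = (x powi (\<alpha> ^ a)) powi (\<alpha> ^ b)"
  by (simp add: power_add power_int_mult)

lemma powi_alpha_cancel:
  assumes N: "N > 1" and \<alpha>: "coprime \<alpha> (int N)" and a: "a \<in> mu N" and b: "b \<in> mu N"
    and eq: "a powi (\<alpha> ^ j) = b powi (\<alpha> ^ i)" and ij: "i \<le> j"
  shows "a powi (\<alpha> ^ (j - i)) = b"
proof (rule powi_mu_inj[OF N _ powi_mu_in b])
  show "coprime (\<alpha> ^ i) (int N)" using \<alpha> by simp
  show "(a powi (\<alpha> ^ (j - i))) powi (\<alpha> ^ i) = b powi (\<alpha> ^ i)"
    using eq ij powi_alpha_add[of a \<alpha> "j - i" i] by simp
qed (use N a in auto)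

lemma unital_partition_block_subset:
  "unital_partition N P \<Longrightarrow> A \<in> P \<Longrightarrow> A \<subseteq> mu N - {1}"
  unfolding unital_partition_def by blast


section \<open>The group ring as a monoid algebra\<close>

text \<open>The nonzero complex numbers, with multiplication written additively, form
  a commutative monoid; its monoid algebra with integer coefficients is a
  commutative ring containing a copy of the group ring Z[mu_N].\<close>

typedef nzcomplex = "{z::complex. z \<noteq> 0}" morphisms nz_val nz_of
  by (rule exI[of _ 1]) simp

instantiation nzcomplex :: comm_monoid_add
begin
definition zero_nzcomplex_def: "0 = nz_of 1"
definition plus_nzcomplex_def: "a + b = nz_of (nz_val a * nz_val b)"
instance
proof
  fix a b c :: nzcomplex
  have nz: "nz_val x \<noteq> 0" for x using nz_val by auto
  show "a + b + c = a + (b + c)" unfolding plus_nzcomplex_def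
    using nz by (simp add: nz_of_inverse mult.assoc)
  show "a + b = b + a" unfolding plus_nzcomplex_def by (simp add: mult.commute)
  show "0 + a = a" unfolding plus_nzcomplex_def zero_nzcomplex_def
    by (simp add: nz_of_inverse nz_val_inverse)
qed
end

lemma nz_val_nonzero: "nz_val x \<noteq> 0"
  using nz_val by auto

lemma nz_val_plus [simp]: "nz_val (a + b) = nz_val a * nz_val b"
  unfolding plus_nzcomplex_def using nz_val_nonzero by (simp add: nz_of_inverse)

definition supp_in :: "nat \<Rightarrow> (complex \<Rightarrow> int) \<Rightarrow> bool" where
  "supp_in N f \<longleftrightarrow> (\<forall>z. f z \<noteq> 0 \<longrightarrow> z \<in> mu N)"

definition emb :: "(complex \<Rightarrow> int) \<Rightarrow> (nzcomplex \<Rightarrow>\<^sub>0 int)" where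
  "emb f = Abs_poly_mapping (\<lambda>c. f (nz_val c))"

lemma supp_grmult: "supp_in N (grmult N f g)"
  unfolding supp_in_def grmult_def by auto

lemma supp_indic: "A \<subseteq> mu N \<Longrightarrow> supp_in N (indic A)"
  unfolding supp_in_def indic_def by (auto split: if_splits)

lemma finite_nz_val_vimage: "N > 0 \<Longrightarrow> finite (nz_val -` mu N)"
  by (rule finite_vimageI[OF finite_mu]) (simp_all add: inj_on_def nz_val_inject)

text \<open>The embedding preserves coefficients (finiteness of support comes from mu_N).\<close>
lemma lookup_emb:
  assumes "N > 0" "supp_in N f"
  shows "Poly_Mapping.lookup (emb f) c = f (nz_val c)"
proof -
  have "{c. f (nz_val c) \<noteq> 0} \<subseteq> nz_val -` mu N"
    using assms(2) unfolding supp_in_def by auto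
  then have "finite {c. f (nz_val c) \<noteq> 0}"
    using finite_nz_val_vimage[OF assms(1)] by (rule finite_subset)
  then show ?thesis unfolding emb_def by simp
qed

lemma emb_mult:
  assumes N: "N > 0" and f: "supp_in N f" and g: "supp_in N g"
  shows "emb (grmult N f g) = emb f * emb g"
proof (rule poly_mapping_eqI)
  fix k
  have inner: "Sum_any (\<lambda>q. Poly_Mapping.lookup (emb g) q when k = l + q) = g (nz_val k / nz_val l)"
    for l
  proof -
    have "(k = l + q) \<longleftrightarrow> q = nz_of (nz_val k / nz_val l)" for q
    proof -
      have "k = l + q \<longleftrightarrow> nz_val k = nz_val l * nz_val q"
        by (metis nz_val_plus nz_val_inject)
      also have "\<dots> \<longleftrightarrow> nz_val q = nz_val k / nz_val l"
        using nz_val_nonzero[of l] by (auto simp: field_simps)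
      also have "\<dots> \<longleftrightarrow> q = nz_of (nz_val k / nz_val l)"
        using nz_val_nonzero[of k] nz_val_nonzero[of l]
        by (metis nz_of_inverse nz_val_inverse divide_eq_0_iff mem_Collect_eq)
      finally show ?thesis .
    qed
    then have "Sum_any (\<lambda>q. Poly_Mapping.lookup (emb g) q when k = l + q)
        = Sum_any (\<lambda>q. g (nz_val q) when q = nz_of (nz_val k / nz_val l))"
      using lookup_emb[OF N g] by simp
    also have "\<dots> = g (nz_val k / nz_val l)"
      using nz_val_nonzero[of k] nz_val_nonzero[of l] by (simp add: nz_of_inverse)
    finally show ?thesis .
  qed
  have img: "nz_val ` (nz_val -` mu N) = mu N"
    using zero_notin_mu[OF N] by (auto simp: image_iff) (metis mem_Collect_eq nz_of_inverse)
  have "Poly_Mapping.lookup (emb f * emb g) k = Sum_any (\<lambda>l. f (nz_val l) * g (nz_val k / nz_val l))"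
    unfolding lookup_mult lookup_emb[OF N f] inner ..
  also have "\<dots> = (\<Sum>l \<in> nz_val -` mu N. f (nz_val l) * g (nz_val k / nz_val l))"
    by (rule Sum_any.expand_superset[OF finite_nz_val_vimage[OF N]])
      (use f in \<open>auto simp: supp_in_def\<close>)
  also have "\<dots> = (\<Sum>w \<in> mu N. f w * g (nz_val k / w))"
    using sum.reindex[of nz_val "nz_val -` mu N" "\<lambda>w. f w * g (nz_val k / w)"] img
    by (simp add: inj_on_def nz_val_inject)
  also have "\<dots> = grmult N f g (nz_val k)"
  proof (cases "nz_val k \<in> mu N")
    case False
    have "g (nz_val k / w) = 0" if "w \<in> mu N" for w
    proof (rule ccontr)
      assume "g (nz_val k / w) \<noteq> 0"
      then have "(nz_val k / w) * w \<in> mu N"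
        using g that mu_mult unfolding supp_in_def by blast
      then show False using False that zero_notin_mu[OF N] by (auto split: if_splits)
    qed
    then show ?thesis using False unfolding grmult_def by simp
  qed (simp add: grmult_def)
  finally show "Poly_Mapping.lookup (emb (grmult N f g)) k = Poly_Mapping.lookup (emb f * emb g) k"
    using lookup_emb[OF N supp_grmult] by simp
qed

lemma emb_one:
  assumes N: "(N::nat) > 0"
  shows "emb (indic {1}) = 1"
proof (rule poly_mapping_eqI)
  fix k
  have "nz_val k = 1 \<longleftrightarrow> k = 0"
    using nz_val_inject[of k 0] by (simp add: zero_nzcomplex_def nz_of_inverse)
  then show "Poly_Mapping.lookup (emb (indic {1})) k = Poly_Mapping.lookup 1 k"
    using lookup_emb[OF N supp_indic[of "{1}" N]] one_in_mu[of N]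
    by (simp add: lookup_one indic_def when_def)
qed

lemma emb_indic:
  assumes N: "N > 0" and A: "A \<subseteq> mu N"
  shows "emb (indic A) = (\<Sum>x\<in>A. Poly_Mapping.single (nz_of x) 1)"
proof (rule poly_mapping_eqI)
  fix k
  have fin: "finite A" using A finite_mu[OF N] finite_subset by blast
  have "(\<Sum>x\<in>A. Poly_Mapping.lookup (Poly_Mapping.single (nz_of x) (1::int)) k)
        = (\<Sum>x\<in>A. if x = nz_val k then 1 else 0)"
  proof (rule sum.cong[OF refl])
    fix x assume "x \<in> A"
    then have "x \<noteq> 0" using A zero_notin_mu[OF N] by auto
    then have "nz_of x = k \<longleftrightarrow> x = nz_val k"
      using nz_of_inverse[of x] nz_val_inverse[of k] by auto
    then show "Poly_Mapping.lookup (Poly_Mapping.single (nz_of x) (1::int)) k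
        = (if x = nz_val k then 1 else 0)"
      by (auto simp: lookup_single when_def)
  qed
  also have "\<dots> = indic A (nz_val k)" using fin by (simp add: sum.delta' indic_def)
  finally show "Poly_Mapping.lookup (emb (indic A)) k =
      Poly_Mapping.lookup (\<Sum>x\<in>A. Poly_Mapping.single (nz_of x) 1) k"
    using lookup_emb[OF N supp_indic[OF A]] by (simp add: lookup_sum)
qed

lemma single_pow:
  assumes "x \<noteq> 0"
  shows "Poly_Mapping.single (nz_of x) (1::int) ^ m = Poly_Mapping.single (nz_of (x ^ m)) 1"
proof (induction m)
  case 0
  have "nz_of 1 = 0" by (simp add: zero_nzcomplex_def)
  then show ?case by simp
next
  case (Suc m)
  have "nz_of x + nz_of (x ^ m) = nz_of (x ^ Suc m)"
    using assms by (simp add: plus_nzcomplex_def nz_of_inverse)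
  then show ?case using Suc by (simp add: mult_single)
qed

fun gpow :: "nat \<Rightarrow> (complex \<Rightarrow> int) \<Rightarrow> nat \<Rightarrow> (complex \<Rightarrow> int)" where
  "gpow N f 0 = indic {1}"
| "gpow N f (Suc m) = grmult N f (gpow N f m)"

lemma supp_gpow: "supp_in N (gpow N f m)"
  by (cases m) (auto simp: supp_grmult supp_indic one_in_mu)

lemma emb_gpow:
  assumes N: "N > 0" and f: "supp_in N f"
  shows "emb (gpow N f m) = emb f ^ m"
  by (induction m) (simp_all add: emb_one[OF N] emb_mult[OF N f supp_gpow])


section \<open>The Frobenius congruence\<close>

lemma frobenius_add:
  fixes x y :: "'a::comm_ring_1"
  assumes q: "prime (q::nat)"
  shows "\<exists>c. (x + y) ^ q = x ^ q + y ^ q + of_nat q * c"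
proof -
  obtain m where m: "q = Suc m" using q by (cases q) auto
  define t where "t k = of_nat (q choose k) * x ^ k * y ^ (q - k)" for k
  define c where "c = (\<Sum>i<m. of_nat ((q choose Suc i) div q) * x ^ Suc i * y ^ (q - Suc i))"
  have "(x + y) ^ q = (\<Sum>k\<le>q. t k)" unfolding t_def by (rule binomial_ring)
  also have "\<dots> = t 0 + (\<Sum>i<m. t (Suc i)) + t q"
    using m by (simp add: sum.atMost_shift)
  also have "(\<Sum>i<m. t (Suc i)) = of_nat q * c"
    unfolding c_def sum_distrib_left
  proof (rule sum.cong[OF refl])
    fix i assume "i \<in> {..<m}"
    then have "q dvd (q choose Suc i)" using m q by (intro dvd_choose_prime) auto
    then have "of_nat q * of_nat ((q choose Suc i) div q) = (of_nat (q choose Suc i) :: 'a)"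
      by (metis dvd_mult_div_cancel of_nat_mult)
    then show "t (Suc i) = of_nat q * (of_nat ((q choose Suc i) div q) * x ^ Suc i * y ^ (q - Suc i))"
      unfolding t_def by (metis mult.assoc)
  qed
  finally have "(x + y) ^ q = x ^ q + y ^ q + of_nat q * c"
    unfolding t_def by (simp add: algebra_simps)
  then show ?thesis by blast
qed

lemma frobenius_sum:
  fixes x :: "'b \<Rightarrow> 'a::comm_ring_1"
  assumes q: "prime (q::nat)" and S: "finite S"
  shows "\<exists>c. (\<Sum>s\<in>S. x s) ^ q = (\<Sum>s\<in>S. x s ^ q) + of_nat q * c"
  using S
proof (induction S rule: finite_induct)
  case empty
  have "q > 0" using q prime_gt_0_nat by blast
  then show ?case by (intro exI[of _ 0]) (simp add: zero_power)
next
  case (insert a S)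
  then obtain c1 where c1: "(\<Sum>s\<in>S. x s) ^ q = (\<Sum>s\<in>S. x s ^ q) + of_nat q * c1" by blast
  obtain c2 where c2: "(x a + (\<Sum>s\<in>S. x s)) ^ q = x a ^ q + (\<Sum>s\<in>S. x s) ^ q + of_nat q * c2"
    using frobenius_add[OF q] by blast
  have "(\<Sum>s\<in>insert a S. x s) ^ q = (\<Sum>s\<in>insert a S. x s ^ q) + of_nat q * (c1 + c2)"
    using insert c1 c2 by (simp add: algebra_simps)
  then show ?case by blast
qed

lemma lookup_of_nat_mult:
  "Poly_Mapping.lookup (of_nat n * c) k = int n * Poly_Mapping.lookup c k"
  by (induction n) (auto simp: distrib_right lookup_add algebra_simps)

text \<open>The basis-sum of A, raised to a power m coprime to N, has coefficient 1
  exactly on A^m (and 0 elsewhere), by injectivity of x |-> x^m.\<close>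
lemma lookup_power_basis_sum:
  assumes N: "N > 1" and A: "A \<subseteq> mu N" and cop: "coprime m N" and w: "w \<in> mu N"
  shows "Poly_Mapping.lookup (\<Sum>x\<in>A. Poly_Mapping.single (nz_of (x ^ m)) (1::int)) (nz_of w)
    = indic ((\<lambda>x. x ^ m) ` A) w"
proof -
  have fin: "finite A" using A finite_mu[of N] N finite_subset by auto
  have w0: "w \<noteq> 0" using w zero_notin_mu[of N] N by auto
  have "Poly_Mapping.lookup (Poly_Mapping.single (nz_of (x ^ m)) (1::int)) (nz_of w)
      = (if x ^ m = w then 1 else 0)" if "x \<in> A" for x
  proof -
    have "x ^ m \<noteq> 0" using that A mu_pow zero_notin_mu[of N] N by fastforce
    then have "nz_of (x ^ m) = nz_of w \<longleftrightarrow> x ^ m = w" using w0 by (simp add: nz_of_inject)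
    then show ?thesis by (auto simp: lookup_single when_def)
  qed
  then have "Poly_Mapping.lookup (\<Sum>x\<in>A. Poly_Mapping.single (nz_of (x ^ m)) (1::int)) (nz_of w)
      = (\<Sum>x\<in>A. if x ^ m = w then 1 else 0)"
    by (simp add: lookup_sum)
  also have "\<dots> = indic ((\<lambda>x. x ^ m) ` A) w"
  proof (cases "w \<in> (\<lambda>x. x ^ m) ` A")
    case True
    then obtain x0 where x0: "x0 \<in> A" "w = x0 ^ m" by blast
    have "x ^ m = w \<longleftrightarrow> x = x0" if "x \<in> A" for x
      using mu_pow_inj[OF N cop, of x x0] x0 A that by auto
    then have "(\<Sum>x\<in>A. if x ^ m = w then 1 else (0::int)) = (\<Sum>x\<in>A. if x = x0 then 1 else 0)"
      by (intro sum.cong) auto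
    also have "\<dots> = 1" using fin x0 by (simp add: sum.delta')
    finally show ?thesis using True by (simp add: indic_def)
  next
    case False
    then have "\<forall>x\<in>A. x ^ m \<noteq> w" by auto
    then show ?thesis using False by (simp add: indic_def)
  qed
  finally show ?thesis .
qed

lemma gpow_indic_prime_cong:
  assumes N: "N > 1" and A: "A \<subseteq> mu N" and q: "prime q" and cop: "coprime q N"
  shows "\<exists>d. \<forall>w\<in>mu N. gpow N (indic A) q w = indic ((\<lambda>x. x ^ q) ` A) w + int q * d w"
proof -
  have N0: "N > 0" using N by simp
  have fin: "finite A" using A finite_mu[OF N0] finite_subset by blast
  obtain d where d: "(\<Sum>x\<in>A. Poly_Mapping.single (nz_of x) (1::int)) ^ q
      = (\<Sum>x\<in>A. Poly_Mapping.single (nz_of x) 1 ^ q) + of_nat q * d"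
    using frobenius_sum[OF q fin] by blast
  have single_q: "Poly_Mapping.single (nz_of x) (1::int) ^ q = Poly_Mapping.single (nz_of (x ^ q)) 1"
    if "x \<in> A" for x
    using that A zero_notin_mu[OF N0] by (intro single_pow) auto
  have "emb (gpow N (indic A) q) = emb (indic A) ^ q"
    by (rule emb_gpow[OF N0 supp_indic[OF A]])
  also have "\<dots> = (\<Sum>x\<in>A. Poly_Mapping.single (nz_of x) 1 ^ q) + of_nat q * d"
    unfolding emb_indic[OF N0 A] by (rule d)
  also have "(\<Sum>x\<in>A. Poly_Mapping.single (nz_of x) (1::int) ^ q)
      = (\<Sum>x\<in>A. Poly_Mapping.single (nz_of (x ^ q)) 1)"
    using single_q by (rule sum.cong[OF refl])
  finally have emb_h: "emb (gpow N (indic A) q)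
      = (\<Sum>x\<in>A. Poly_Mapping.single (nz_of (x ^ q)) 1) + of_nat q * d" .
  have "gpow N (indic A) q w = indic ((\<lambda>x. x ^ q) ` A) w + int q * Poly_Mapping.lookup d (nz_of w)"
    if w: "w \<in> mu N" for w
  proof -
    have "w \<noteq> 0" using w zero_notin_mu[OF N0] by auto
    then have "gpow N (indic A) q w = Poly_Mapping.lookup (emb (gpow N (indic A) q)) (nz_of w)"
      unfolding lookup_emb[OF N0 supp_gpow] by (simp add: nz_of_inverse)
    also have "\<dots> = indic ((\<lambda>x. x ^ q) ` A) w + int q * Poly_Mapping.lookup d (nz_of w)"
      unfolding emb_h lookup_add lookup_of_nat_mult lookup_power_basis_sum[OF N A cop w] ..
    finally show ?thesis .
  qed
  then show ?thesis by (intro exI[of _ "\<lambda>w. Poly_Mapping.lookup d (nz_of w)"]) blast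
qed


section \<open>Schur's lemma for unital partitions\<close>

lemma gpow_zspan:
  assumes P: "unital_partition N P" and f: "f \<in> zspan P"
  shows "gpow N f m \<in> zspan P"
proof (induction m)
  case 0
  show ?case unfolding zspan_def
    by (intro CollectI exI[of _ 1] exI[of _ "\<lambda>_::complex set. 0"]) simp
next
  case (Suc m)
  then show ?case using P f unfolding unital_partition_def by simp
qed

lemma indic_zspan:
  assumes P: "unital_partition N P" and A: "A \<in> P"
  shows "indic A \<in> zspan P"
proof -
  have fin: "finite P" using P unfolding unital_partition_def by blast
  have "(\<Sum>B\<in>P. (if B = A then 1 else 0) * indic B z) = indic A z" for z
  proof -
    have "(\<Sum>B\<in>P. (if B = A then 1 else 0) * indic B z) = (\<Sum>B\<in>P. if A = B then indic B z else 0)"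
      by (intro sum.cong) auto
    also have "\<dots> = indic A z" using fin A by (simp add: sum.delta)
    finally show ?thesis .
  qed
  then show ?thesis unfolding zspan_def
    by (intro CollectI exI[of _ 0] exI[of _ "\<lambda>B. if B = A then 1 else 0"]) auto
qed

lemma zspan_const_on_block:
  assumes P: "unital_partition N P" and f: "f \<in> zspan P" and B: "B \<in> P"
    and z: "z \<in> B" and w: "w \<in> B"
  shows "f z = f w"
proof -
  obtain c0 c where f_eq: "f = (\<lambda>z. c0 * indic {1} z + (\<Sum>B\<in>P. c B * indic B z))"
    using f unfolding zspan_def by blast
  have finP: "finite P" and disj: "\<forall>A\<in>P. \<forall>B\<in>P. A \<noteq> B \<longrightarrow> A \<inter> B = {}"
    using P unfolding unital_partition_def by simp_all
  have Bsub: "B \<subseteq> mu N - {1}" by (rule unital_partition_block_subset[OF P B])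
  have "f v = c B" if v: "v \<in> B" for v
  proof -
    have "(\<Sum>B'\<in>P. c B' * indic B' v) = (\<Sum>B'\<in>P. if B = B' then c B' else 0)"
      using disj B v by (intro sum.cong) (auto simp: indic_def)
    also have "\<dots> = c B" using finP B by simp
    finally show ?thesis using f_eq v Bsub by (auto simp: indic_def)
  qed
  then show ?thesis using z w by simp
qed

definition union_of_blocks :: "complex set set \<Rightarrow> complex set \<Rightarrow> bool" where
  "union_of_blocks P X \<longleftrightarrow> (\<forall>B\<in>P. B \<inter> X \<noteq> {} \<longrightarrow> B \<subseteq> X)"

text \<open>Schur's lemma, prime case: a block meeting A^q lies inside A^q.  Otherwise
  (a_A)^q, which is constant on the block, would take values congruent to 1
  and to 0 modulo q there.\<close>
lemma block_power_prime:
  assumes N: "N > 1" and P: "unital_partition N P" and A: "A \<in> P"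
    and q: "prime q" and cop: "coprime q N"
  shows "union_of_blocks P ((\<lambda>x. x ^ q) ` A)"
  unfolding union_of_blocks_def
proof (intro ballI impI subsetI)
  fix B z assume B: "B \<in> P" and meet: "B \<inter> (\<lambda>x. x ^ q) ` A \<noteq> {}" and z: "z \<in> B"
  obtain z0 where z0: "z0 \<in> B" "z0 \<in> (\<lambda>x. x ^ q) ` A" using meet by blast
  have Bmu: "B \<subseteq> mu N" using unital_partition_block_subset[OF P B] by blast
  obtain d where d: "\<forall>w\<in>mu N. gpow N (indic A) q w = indic ((\<lambda>x. x ^ q) ` A) w + int q * d w"
    using gpow_indic_prime_cong[OF N _ q cop] unital_partition_block_subset[OF P A] by blast
  have "gpow N (indic A) q z0 = gpow N (indic A) q z"
    by (rule zspan_const_on_block[OF P gpow_zspan[OF P indic_zspan[OF P A]] B z0(1) z])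
  moreover have "gpow N (indic A) q z0 = 1 + int q * d z0"
    using d z0 Bmu by (auto simp: indic_def)
  ultimately have eq: "1 + int q * d z0 = gpow N (indic A) q z" by simp
  show "z \<in> (\<lambda>x. x ^ q) ` A"
  proof (rule ccontr)
    assume "z \<notin> (\<lambda>x. x ^ q) ` A"
    then have "gpow N (indic A) q z = int q * d z"
      using d z Bmu by (auto simp: indic_def)
    then have "1 = int q * (d z - d z0)" using eq by (simp add: algebra_simps)
    then have "int q dvd 1" by (rule dvdI)
    then show False using q by simp
  qed
qed

lemma block_power_prime_union:
  assumes N: "N > 1" and P: "unital_partition N P" and X: "X \<subseteq> mu N - {1}"
    and X_union: "union_of_blocks P X" and q: "prime q" and cop: "coprime q N"
  shows "union_of_blocks P ((\<lambda>x. x ^ q) ` X)"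
  unfolding union_of_blocks_def
proof (intro ballI impI subsetI)
  fix B z assume B: "B \<in> P" and meet: "B \<inter> (\<lambda>x. x ^ q) ` X \<noteq> {}" and z: "z \<in> B"
  obtain x where x: "x \<in> X" "x ^ q \<in> B" using meet by blast
  have "\<Union>P = mu N - {1}" using P unfolding unital_partition_def by simp
  then obtain A where A: "A \<in> P" "x \<in> A" using x X by blast
  have AX: "A \<subseteq> X" using X_union A x unfolding union_of_blocks_def by blast
  have "z \<in> (\<lambda>x. x ^ q) ` A"
    using block_power_prime[OF N P A(1) q cop] B z x A unfolding union_of_blocks_def by blast
  then show "z \<in> (\<lambda>x. x ^ q) ` X" using AX by blast
qed

text \<open>Schur's lemma: for m coprime to N, the image A^m of a block is a union of
  blocks.  Induction on m, peeling off one prime factor at a time.\<close>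
lemma block_power_union_of_blocks:
  assumes N: "N > 1" and P: "unital_partition N P" and A: "A \<in> P"
  shows "coprime m N \<Longrightarrow> union_of_blocks P ((\<lambda>x. x ^ m) ` A)"
proof (induction m rule: less_induct)
  case (less m)
  show ?case
  proof (cases "m = 1")
    case True
    have "\<forall>A\<in>P. \<forall>B\<in>P. A \<noteq> B \<longrightarrow> A \<inter> B = {}" using P unfolding unital_partition_def by simp
    then show ?thesis using True A unfolding union_of_blocks_def by auto
  next
    case False
    then obtain q where q: "prime q" "q dvd m" using prime_factor_nat by blast
    then obtain m' where m': "m = m' * q" by (metis dvd_div_mult_self)
    have "m \<noteq> 0" using coprime_nonzero[OF N less.prems] .
    then have lt: "m' < m" using m' prime_gt_1_nat[OF q(1)] by simp
    have copq: "coprime q N" and copm': "coprime m' N" using less.prems m' by auto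
    have img: "(\<lambda>x. x ^ m) ` A = (\<lambda>x. x ^ q) ` ((\<lambda>x. x ^ m') ` A)"
      by (simp add: m' power_mult image_image)
    have "(\<lambda>x. x ^ m') ` A \<subseteq> mu N - {1}"
    proof (rule image_subsetI)
      fix x assume "x \<in> A"
      then have "x \<in> mu N - {1}" using unital_partition_block_subset[OF P A] by blast
      then show "x ^ m' \<in> mu N - {1}" by (rule mu_pow_ne1[OF N copm'])
    qed
    then show ?thesis unfolding img
      by (rule block_power_prime_union[OF N P _ less.IH[OF lt copm'] q(1) copq])
  qed
qed

text \<open>Consequence: if a block contains x and x^e (e a unit mod N), then raising
  to the e-th power maps the block onto itself; A^e is a union of blocks
  meeting A, and has the same size as A.\<close>
lemma block_powi_stable:
  assumes N: "N > 1" and P: "unital_partition N P" and A: "A \<in> P"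
    and e: "coprime e (int N)" and x: "x \<in> A" and ex: "x powi e \<in> A"
  shows "(\<lambda>z. z powi e) ` A = A"
proof -
  define m where "m = nat (e mod int N)"
  have copm: "coprime m N" unfolding m_def by (rule coprime_nat_mod[OF N e])
  have Amu: "A \<subseteq> mu N" using unital_partition_block_subset[OF P A] by blast
  have img: "(\<lambda>z. z powi e) ` A = (\<lambda>z. z ^ m) ` A"
    unfolding m_def using Amu N by (intro image_cong) (auto intro: powi_mu)
  have "A \<inter> (\<lambda>z. z ^ m) ` A \<noteq> {}" using x ex img by blast
  then have sub: "A \<subseteq> (\<lambda>z. z ^ m) ` A"
    using block_power_union_of_blocks[OF N P A copm] A unfolding union_of_blocks_def by blast
  have finA: "finite A" using Amu finite_mu[of N] N finite_subset by auto
  have "inj_on (\<lambda>z. z ^ m) A"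
    using mu_pow_inj[OF N copm] Amu by (auto intro: inj_onI)
  then have "card ((\<lambda>z. z ^ m) ` A) = card A" by (rule card_image)
  then have "A = (\<lambda>z. z ^ m) ` A" using sub finA by (intro card_subset_eq) auto
  then show ?thesis unfolding img by (rule sym)
qed


section \<open>Stable exponents\<close>

lemma shift_invariant_iff_dvd:
  fixes S :: "nat \<Rightarrow> bool"
  assumes S0: "S 0" and u: "0 < u" and shift: "\<And>e. S (e + u) \<longleftrightarrow> S e"
    and small: "\<And>v. 0 < v \<Longrightarrow> v < u \<Longrightarrow> \<not> S v"
  shows "S e \<longleftrightarrow> u dvd e"
proof -
  have "S (k * u + r) \<longleftrightarrow> S r" for k r
  proof (induction k)
    case (Suc k)
    have "Suc k * u + r = (k * u + r) + u" by simp
    then show ?case using Suc shift[of "k * u + r"] by (simp only:)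
  qed simp
  then have "S e \<longleftrightarrow> S (e mod u)" by (metis div_mult_mod_eq)
  also have "\<dots> \<longleftrightarrow> e mod u = 0" using S0 small u by (metis mod_less_divisor neq0_conv)
  finally show ?thesis by (simp add: dvd_eq_mod_eq_0)
qed

text \<open>Membership of x^(alpha^e) in the block of x does not depend on x: it means
  that raising to alpha^e stabilises the block.  Hence these exponents are the
  multiples of the least positive one, u.\<close>
lemma block_exponent_criterion:
  assumes N: "N > 1" and P: "unital_partition N P" and A: "A \<in> P"
    and \<alpha>: "coprime \<alpha> (int N)" and y: "y \<in> A" and x: "x \<in> A"
  shows "x powi (\<alpha> ^ e) \<in> A \<longleftrightarrow> (LEAST u. 0 < u \<and> y powi (\<alpha> ^ u) \<in> A) dvd e"
proof -
  define stable where "stable e \<longleftrightarrow> (\<lambda>z. z powi (\<alpha> ^ e)) ` A = A" for e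
  have cop: "coprime (\<alpha> ^ e) (int N)" for e using \<alpha> by simp
  have mem_iff: "z powi (\<alpha> ^ e) \<in> A \<longleftrightarrow> stable e" if "z \<in> A" for z e
    using block_powi_stable[OF N P A cop that] that unfolding stable_def by blast
  define u where "u = (LEAST u. 0 < u \<and> stable u)"
  have Amu: "A \<subseteq> mu N" using unital_partition_block_subset[OF P A] by blast
  have "[\<alpha> ^ totient N = 1] (mod int N)"
    using residues.euler_theorem[of "int N" \<alpha>] \<alpha> N by (simp add: residues_def)
  then have "y powi (\<alpha> ^ totient N) = y"
    using powi_mu[of N y "\<alpha> ^ totient N"] y Amu N by (auto simp: cong_def)
  then have "stable (totient N)" using mem_iff[OF y, of "totient N"] y by simp
  moreover have "totient N > 0" using N by simp
  ultimately have u: "0 < u" "stable u" using LeastI[of "\<lambda>u. 0 < u \<and> stable u"] unfolding u_def by blast+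
  have "stable e \<longleftrightarrow> u dvd e"
  proof (rule shift_invariant_iff_dvd)
    show "stable 0" unfolding stable_def by simp
    show "stable (e + u) \<longleftrightarrow> stable e" for e
    proof -
      have "(\<lambda>z. z powi (\<alpha> ^ (e + u))) ` A = (\<lambda>z. z powi (\<alpha> ^ e)) ` ((\<lambda>z. z powi (\<alpha> ^ u)) ` A)"
        unfolding image_image using powi_alpha_add[of _ \<alpha> u e] by (simp add: add.commute)
      then show ?thesis using u(2) unfolding stable_def by simp
    qed
    show "\<not> stable v" if "0 < v" "v < u" for v
      using not_less_Least[of v "\<lambda>u. 0 < u \<and> stable u"] that unfolding u_def by blast
  qed (rule u(1))
  moreover have "u = (LEAST u. 0 < u \<and> y powi (\<alpha> ^ u) \<in> A)"
    unfolding u_def using mem_iff[OF y] by simp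
  ultimately show ?thesis using mem_iff[OF x] by simp
qed


theorem lemma3p8:
  fixes p n k :: nat and \<alpha> :: int and P :: "complex set set"
    and A :: "complex set" and y :: complex and i j :: nat
  assumes p: "prime p" "odd p" and n: "n \<ge> 1"
    and alpha_unit: "coprime \<alpha> (int (p ^ n))"
    and alpha_gen: "\<forall>x::int. coprime x (int (p ^ n)) \<longrightarrow> (\<exists>e::nat. [\<alpha> ^ e = x] (mod int (p ^ n)))"
    and P: "unital_partition (p ^ n) P"
    and A: "A \<in> P"
    and y: "y \<in> A \<inter> (\<lambda>x. x ^ (p ^ k)) ` generators (p ^ n)"
  defines "u \<equiv> (LEAST u::nat. 0 < u \<and> y powi (\<alpha> ^ u) \<in> A)"
  defines "\<beta> \<equiv> \<alpha> ^ u"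
  defines "r \<equiv> totient (p ^ (n - k)) div u - 1"
  defines "B0 \<equiv> {y powi (\<beta> ^ t) | t. t \<le> r}"
  assumes "(\<lambda>x. x powi (\<alpha> ^ j)) ` B0 \<subseteq> (\<lambda>x. x powi (\<alpha> ^ i)) ` A"
  shows "[j = i] (mod u)"
proof -
  have N: "p ^ n > 1" using p(1) n by (intro one_less_power prime_gt_1_nat) auto
  have yA: "y \<in> A" using y by blast
  have Amu: "A \<subseteq> mu (p ^ n)" using unital_partition_block_subset[OF P A] by blast
  have criterion: "z powi (\<alpha> ^ e) \<in> A \<longleftrightarrow> u dvd e" if "z \<in> A" for z e
    unfolding u_def by (rule block_exponent_criterion[OF N P A alpha_unit yA that])
  \<comment> \<open>Only the element y = y^(beta^0) of B0 is needed.\<close>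
  have "y \<in> B0" unfolding B0_def by (intro CollectI exI[of _ 0]) simp
  then obtain x where x: "x \<in> A" "y powi (\<alpha> ^ j) = x powi (\<alpha> ^ i)" using assms(13) by blast
  have cancel: "a powi (\<alpha> ^ (e' - e)) = b"
    if "a \<in> A" "b \<in> A" "a powi (\<alpha> ^ e') = b powi (\<alpha> ^ e)" "e \<le> e'" for a b e e'
    using powi_alpha_cancel[OF N alpha_unit _ _ that(3,4)] that(1,2) Amu by blast
  show ?thesis
  proof (cases "i \<le> j")
    case True
    then have "y powi (\<alpha> ^ (j - i)) = x" by (rule cancel[OF yA x(1) x(2)])
    then have "u dvd (j - i)" using criterion[OF yA, of "j - i"] x(1) by simp
    then show ?thesis using True by (simp add: cong_diff_iff_cong_0_nat[symmetric] cong_0_iff)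
  next
    case False
    then have "x powi (\<alpha> ^ (i - j)) = y" by (intro cancel[OF x(1) yA x(2)[symmetric]]) simp
    then have "u dvd (i - j)" using criterion[OF x(1), of "i - j"] yA by simp
    then have "[i = j] (mod u)" using False
      by (simp add: cong_diff_iff_cong_0_nat[symmetric] cong_0_iff)
    then show ?thesis by (rule cong_sym)
  qed
qed

end
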